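(* Let $S$ be a compact topological space and let $g\in\mathscr{C}(S)[x_1,\dots,x_n]$ be such that $g_s$ is not the zero polynomial for every $s\in S$. Then $FRad(\langle g\rangle)=\sqrt{\langle g\rangle}$ as presheaves, i.e. $FRad(\langle g\rangle)(U)=\sqrt{\langle g\rangle}(U)$ for every open $U\subseteq S$.
   Context: For $U\subseteq S$ open, $\mathscr{C}(U)$ is the ring of continuous complex-valued functions on $U$. For $f=\sum_\alpha a_\alpha x^\alpha\in\mathscr{C}(U)[x_1,\dots,x_n]$ and $s\in U$, $f_s=\sum_\alpha a_\alpha(s)x^\alpha\in\mathbb{C}[x_1,\dots,x_n]$. $\langle g\rangle(U)$ is the ideal of $\mathscr{C}(U)[x_1,\dots,x_n]$ generated by $g|_U$, and $\langle g\rangle(U)|_s=\{h_s:h\in\langle g\rangle(U)\}$. Define $\sqrt{\langle g\rangle}(U)=\{f\in\mathscr{C}(U)[x_1,\dots,x_n]: f^m\in\langle g\rangle(U)\text{ for some } m\in\mathbb{N}\}$ and $FRad(\langle g\rangle)(U)=\{f\in\mathscr{C}(U)[x_1,\dots,x_n]: f_s\in\sqrt{\langle g\rangle(U)|_s}\text{ for all }s\in U\}$. *)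

theory Defs
  imports "HOL-Analysis.Analysis" "HOL-Library.Poly_Mapping"
begin

text \<open>Multivariate complex polynomials in the variables x_1..x_n are represented as
  poly_mappings from monomials (exponent vectors, variable x_(i+1) has index i)
  to complex coefficients, with all monomials involving only indices < n.\<close>

type_synonym mpoly = "((nat, nat) poly_mapping, complex) poly_mapping"

definition in_vars :: "nat \<Rightarrow> mpoly \<Rightarrow> bool" where
  "in_vars n p \<longleftrightarrow> (\<forall>a. a \<in> Poly_Mapping.keys p \<longrightarrow> Poly_Mapping.keys (a::(nat, nat) poly_mapping) \<subseteq> {..<n})"

text \<open>An element f = sum a_alpha x^alpha of C(U)[x_1..x_n] is represented by the map
  s \<mapsto> f_s (extended by 0 outside U): finitely many monomials overall, all
  coefficient functions continuous on U.\<close>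

definition cpolys :: "nat \<Rightarrow> 's topology \<Rightarrow> 's set \<Rightarrow> ('s \<Rightarrow> mpoly) set" where
  "cpolys n X U = {f. (\<forall>s. s \<notin> U \<longrightarrow> f s = 0)
      \<and> finite (\<Union>s\<in>U. Poly_Mapping.keys (f s))
      \<and> (\<forall>s\<in>U. in_vars n (f s))
      \<and> (\<forall>\<alpha>. continuous_map (subtopology X U) euclidean (\<lambda>s. Poly_Mapping.lookup (f s) \<alpha>))}"

definition restr :: "'s set \<Rightarrow> ('s \<Rightarrow> mpoly) \<Rightarrow> ('s \<Rightarrow> mpoly)" where
  "restr U g = (\<lambda>s. if s \<in> U then g s else 0)"

definition cpow :: "'s set \<Rightarrow> ('s \<Rightarrow> mpoly) \<Rightarrow> nat \<Rightarrow> ('s \<Rightarrow> mpoly)" where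
  "cpow U f m = (\<lambda>s. if s \<in> U then f s ^ m else 0)"

definition gen_ideal :: "nat \<Rightarrow> 's topology \<Rightarrow> ('s \<Rightarrow> mpoly) \<Rightarrow> 's set \<Rightarrow> ('s \<Rightarrow> mpoly) set" where
  "gen_ideal n X g U = {(\<lambda>s. h s * restr U g s) | h. h \<in> cpolys n X U}"

definition ideal_at :: "nat \<Rightarrow> 's topology \<Rightarrow> ('s \<Rightarrow> mpoly) \<Rightarrow> 's set \<Rightarrow> 's \<Rightarrow> mpoly set" where
  "ideal_at n X g U s = {h s | h. h \<in> gen_ideal n X g U}"

definition poly_radical :: "mpoly set \<Rightarrow> mpoly set" where
  "poly_radical I = {p. \<exists>m::nat. p ^ m \<in> I}"

definition sqrt_ideal :: "nat \<Rightarrow> 's topology \<Rightarrow> ('s \<Rightarrow> mpoly) \<Rightarrow> 's set \<Rightarrow> ('s \<Rightarrow> mpoly) set" where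
  "sqrt_ideal n X g U = {f \<in> cpolys n X U. \<exists>m::nat. cpow U f m \<in> gen_ideal n X g U}"

definition FRad :: "nat \<Rightarrow> 's topology \<Rightarrow> ('s \<Rightarrow> mpoly) \<Rightarrow> 's set \<Rightarrow> ('s \<Rightarrow> mpoly) set" where
  "FRad n X g U = {f \<in> cpolys n X U. \<forall>s\<in>U. f s \<in> poly_radical (ideal_at n X g U s)}"

end

theory Submission
  imports Defs "HOL-Computational_Algebra.Polynomial_Factorial" "HOL-Computational_Algebra.Field_as_Ring"
begin

text \<open>For \<open>f\<close> in \<open>FRad(\<langle>g\<rangle>)(U)\<close> we know that \<open>g\<^sub>s\<close> divides some power \<open>f\<^sub>s\<^sup>m\<close>, with
  \<open>m\<close> depending on \<open>s \<in> U\<close>. Two facts turn this into \<open>f\<^sup>D = Q g\<close> with \<open>Q\<close> continuous.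

  First, the exponent can be bounded by a number depending only on the support of \<open>g\<^sub>s\<close>,
  which ranges over a fixed finite set. After a shear \<open>x\<^sub>0 \<mapsto> t\<close>, \<open>x\<^sub>i \<mapsto> x\<^sub>i + t\<^bsup>B^i\<^esup>\<close>
  the polynomial \<open>g\<^sub>s\<close> has a constant leading coefficient in \<open>t\<close>, so pseudo-division by it
  stays inside the polynomial ring; specialising the remaining variables reduces the question
  to the univariate fact that \<open>q\<close> dividing \<open>p\<^sup>k\<close> implies \<open>q\<close> dividing \<open>p\<^bsup>deg q\<^esup>\<close>.

  Second, the quotients \<open>Q\<^sub>s = f\<^sub>s\<^sup>D / g\<^sub>s\<close> are supported in a fixed finite set of monomials,
  and on the span of that set multiplication by \<open>g\<^sub>s\<^sub>0\<close> is injective, hence bounded below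
  in the l1 norm of coefficients. The bound survives small perturbations of \<open>g\<^sub>s\<^sub>0\<close>, which
  makes the coefficients of \<open>Q\<close> continuous.\<close>

abbreviation (input) lookup where "lookup \<equiv> Poly_Mapping.lookup"
abbreviation (input) keys where "keys \<equiv> Poly_Mapping.keys"
abbreviation (input) single where "single \<equiv> Poly_Mapping.single"

section \<open>Substitution homomorphisms\<close>

lemma poly_mapping_eq_sum_single:
  fixes p :: "'a \<Rightarrow>\<^sub>0 'b::comm_monoid_add"
  assumes "finite A" "keys p \<subseteq> A"
  shows "p = (\<Sum>\<alpha>\<in>A. single \<alpha> (lookup p \<alpha>))"
proof (rule poly_mapping_eqI)
  fix k
  have "lookup (\<Sum>\<alpha>\<in>A. single \<alpha> (lookup p \<alpha>)) k = (\<Sum>\<alpha>\<in>A. if \<alpha> = k then lookup p \<alpha> else 0)"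
    by (simp add: lookup_sum lookup_single when_def)
  also have "\<dots> = lookup p k"
    using assms by (auto simp: sum.delta in_keys_iff)
  finally show "lookup p k = lookup (\<Sum>\<alpha>\<in>A. single \<alpha> (lookup p \<alpha>)) k" by simp
qed

lemma poly_mapping_eq_sum_keys:
  fixes p :: "'a \<Rightarrow>\<^sub>0 'b::comm_monoid_add"
  shows "p = (\<Sum>\<alpha>\<in>keys p. single \<alpha> (lookup p \<alpha>))"
  by (rule poly_mapping_eq_sum_single) auto

lemma mult_eq_sum_single:
  fixes p q :: "'a::comm_monoid_add \<Rightarrow>\<^sub>0 'b::comm_semiring_1"
  assumes "finite A" "keys p \<subseteq> A" "finite B" "keys q \<subseteq> B"
  shows "p * q = (\<Sum>a\<in>A. \<Sum>b\<in>B. single (a+b) (lookup p a * lookup q b))"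
proof -
  have "p * q = (\<Sum>a\<in>A. single a (lookup p a)) * (\<Sum>b\<in>B. single b (lookup q b))"
    using poly_mapping_eq_sum_single[OF assms(1,2)] poly_mapping_eq_sum_single[OF assms(3,4)] by simp
  also have "\<dots> = (\<Sum>a\<in>A. \<Sum>b\<in>B. single a (lookup p a) * single b (lookup q b))"
    by (simp add: sum_distrib_left sum_distrib_right sum.swap[of _ B A])
  finally show ?thesis by (simp add: mult_single)
qed

lemma lookup_mult_eq_sum:
  fixes p q :: "'a::comm_monoid_add \<Rightarrow>\<^sub>0 'b::comm_semiring_1"
  assumes "finite A" "keys p \<subseteq> A" "finite B" "keys q \<subseteq> B"
  shows "lookup (p * q) k = (\<Sum>a\<in>A. \<Sum>b\<in>B. if a + b = k then lookup p a * lookup q b else 0)"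
  by (subst mult_eq_sum_single[OF assms]) (simp add: lookup_sum lookup_single when_def)

definition is_ring_hom :: "('a::comm_ring_1 \<Rightarrow> 'b::comm_ring_1) \<Rightarrow> bool" where
  "is_ring_hom h \<longleftrightarrow> h 0 = 0 \<and> h 1 = 1 \<and> (\<forall>a b. h (a + b) = h a + h b) \<and> (\<forall>a b. h (a * b) = h a * h b)"

lemma is_ring_homD:
  assumes "is_ring_hom h"
  shows "h 0 = 0" "h 1 = 1" "h (a + b) = h a + h b" "h (a * b) = h a * h b"
  using assms by (auto simp: is_ring_hom_def)

lemma is_ring_hom_sum: "is_ring_hom h \<Longrightarrow> h (sum f A) = (\<Sum>x\<in>A. h (f x))"
  by (induction A rule: infinite_finite_induct) (auto simp: is_ring_homD)

lemma is_ring_hom_prod: "is_ring_hom h \<Longrightarrow> h (prod f A) = (\<Prod>x\<in>A. h (f x))"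
  by (induction A rule: infinite_finite_induct) (auto simp: is_ring_homD)

lemma is_ring_hom_power: "is_ring_hom h \<Longrightarrow> h (a ^ k) = h a ^ k"
  by (induction k) (auto simp: is_ring_homD)

lemma is_ring_hom_comp: "is_ring_hom h \<Longrightarrow> is_ring_hom k \<Longrightarrow> is_ring_hom (k \<circ> h)"
  by (auto simp: is_ring_hom_def)

lemma is_ring_hom_id: "is_ring_hom id"
  by (auto simp: is_ring_hom_def)

lemma is_ring_hom_dvd: assumes "is_ring_hom h" "a dvd b" shows "h a dvd h b"
proof -
  from assms(2) obtain c where "b = a * c" by (auto simp: dvd_def)
  then have "h b = h a * h c" using is_ring_homD(4)[OF assms(1)] by simp
  then show ?thesis by simp
qed

definition monom_eval :: "(nat \<Rightarrow> 'b::comm_semiring_1) \<Rightarrow> (nat \<Rightarrow>\<^sub>0 nat) \<Rightarrow> 'b" where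
  "monom_eval \<sigma> \<alpha> = (\<Prod>i\<in>keys \<alpha>. \<sigma> i ^ lookup \<alpha> i)"

lemma monom_eval_superset:
  assumes "finite A" "keys \<alpha> \<subseteq> A"
  shows "monom_eval \<sigma> \<alpha> = (\<Prod>i\<in>A. \<sigma> i ^ lookup \<alpha> i)"
  unfolding monom_eval_def
  by (rule prod.mono_neutral_left) (use assms in \<open>auto simp: in_keys_iff\<close>)

lemma monom_eval_add: "monom_eval \<sigma> (\<alpha> + \<beta>) = monom_eval \<sigma> \<alpha> * monom_eval \<sigma> \<beta>"
proof -
  let ?A = "keys \<alpha> \<union> keys \<beta>"
  have k: "keys (\<alpha> + \<beta>) \<subseteq> ?A" by (rule keys_add)
  have "monom_eval \<sigma> (\<alpha> + \<beta>) = (\<Prod>i\<in>?A. \<sigma> i ^ lookup (\<alpha>+\<beta>) i)"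
    by (rule monom_eval_superset) (use k in auto)
  also have "\<dots> = (\<Prod>i\<in>?A. \<sigma> i ^ lookup \<alpha> i) * (\<Prod>i\<in>?A. \<sigma> i ^ lookup \<beta> i)"
    by (simp add: lookup_add power_add prod.distrib)
  also have "\<dots> = monom_eval \<sigma> \<alpha> * monom_eval \<sigma> \<beta>"
    using monom_eval_superset[of "keys \<alpha> \<union> keys \<beta>" \<alpha> \<sigma>] monom_eval_superset[of "keys \<alpha> \<union> keys \<beta>" \<beta> \<sigma>] by simp
  finally show ?thesis .
qed

lemma monom_eval_zero [simp]: "monom_eval \<sigma> 0 = 1"
  by (simp add: monom_eval_def)

definition mpoly_subst :: "(complex \<Rightarrow> 'b::comm_ring_1) \<Rightarrow> (nat \<Rightarrow> 'b) \<Rightarrow> mpoly \<Rightarrow> 'b" where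
  "mpoly_subst \<phi> \<sigma> p = (\<Sum>\<alpha>\<in>keys p. \<phi> (lookup p \<alpha>) * monom_eval \<sigma> \<alpha>)"

lemma mpoly_subst_superset:
  assumes "\<phi> 0 = 0" "finite A" "keys p \<subseteq> A"
  shows "mpoly_subst \<phi> \<sigma> p = (\<Sum>\<alpha>\<in>A. \<phi> (lookup p \<alpha>) * monom_eval \<sigma> \<alpha>)"
  unfolding mpoly_subst_def
  by (rule sum.mono_neutral_left) (use assms in \<open>auto simp: in_keys_iff\<close>)

lemma mpoly_subst_add:
  assumes "is_ring_hom \<phi>"
  shows "mpoly_subst \<phi> \<sigma> (p + q) = mpoly_subst \<phi> \<sigma> p + mpoly_subst \<phi> \<sigma> q"
proof -
  let ?A = "keys p \<union> keys q"
  have "mpoly_subst \<phi> \<sigma> (p + q) = (\<Sum>\<alpha>\<in>?A. \<phi> (lookup (p+q) \<alpha>) * monom_eval \<sigma> \<alpha>)"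
    by (rule mpoly_subst_superset) (use assms keys_add[of p q] in \<open>auto simp: is_ring_homD\<close>)
  also have "\<dots> = (\<Sum>\<alpha>\<in>?A. \<phi> (lookup p \<alpha>) * monom_eval \<sigma> \<alpha>) + (\<Sum>\<alpha>\<in>?A. \<phi> (lookup q \<alpha>) * monom_eval \<sigma> \<alpha>)"
    using assms by (simp add: lookup_add is_ring_homD distrib_right sum.distrib)
  also have "\<dots> = mpoly_subst \<phi> \<sigma> p + mpoly_subst \<phi> \<sigma> q"
    using mpoly_subst_superset[of \<phi> ?A p \<sigma>] mpoly_subst_superset[of \<phi> ?A q \<sigma>] assms by (simp add: is_ring_homD)
  finally show ?thesis .
qed

lemma mpoly_subst_zero: "mpoly_subst \<phi> \<sigma> 0 = 0"
  by (simp add: mpoly_subst_def)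

lemma mpoly_subst_sum:
  assumes "is_ring_hom \<phi>"
  shows "mpoly_subst \<phi> \<sigma> (sum f A) = (\<Sum>x\<in>A. mpoly_subst \<phi> \<sigma> (f x))"
  by (induction A rule: infinite_finite_induct) (auto simp: mpoly_subst_zero mpoly_subst_add[OF assms])

lemma mpoly_subst_single:
  assumes "is_ring_hom \<phi>"
  shows "mpoly_subst \<phi> \<sigma> (single \<alpha> c) = \<phi> c * monom_eval \<sigma> \<alpha>"
  using assms by (cases "c = 0") (auto simp: mpoly_subst_def is_ring_homD)

lemma mpoly_subst_mult:
  assumes "is_ring_hom \<phi>"
  shows "mpoly_subst \<phi> \<sigma> (p * q) = mpoly_subst \<phi> \<sigma> p * mpoly_subst \<phi> \<sigma> q"
proof -
  have "mpoly_subst \<phi> \<sigma> (p * q) = (\<Sum>a\<in>keys p. \<Sum>b\<in>keys q. \<phi> (lookup p a * lookup q b) * monom_eval \<sigma> (a + b))"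
    by (subst mult_eq_sum_single[of "keys p" p "keys q" q]) (auto simp: mpoly_subst_sum[OF assms] mpoly_subst_single[OF assms])
  also have "\<dots> = (\<Sum>a\<in>keys p. \<Sum>b\<in>keys q. (\<phi> (lookup p a) * monom_eval \<sigma> a) * (\<phi> (lookup q b) * monom_eval \<sigma> b))"
    using assms by (simp add: is_ring_homD monom_eval_add mult_ac)
  also have "\<dots> = mpoly_subst \<phi> \<sigma> p * mpoly_subst \<phi> \<sigma> q"
    by (simp add: mpoly_subst_def sum_distrib_left sum_distrib_right sum.swap[of _ "keys q" "keys p"])
  finally show ?thesis .
qed

lemma mpoly_subst_one:
  assumes "is_ring_hom \<phi>"
  shows "mpoly_subst \<phi> \<sigma> 1 = 1"
proof -
  have "mpoly_subst \<phi> \<sigma> (single 0 1) = \<phi> 1 * monom_eval \<sigma> 0" by (rule mpoly_subst_single[OF assms])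
  then show ?thesis using assms by (simp add: is_ring_homD)
qed

lemma is_ring_hom_mpoly_subst: "is_ring_hom \<phi> \<Longrightarrow> is_ring_hom (mpoly_subst \<phi> \<sigma>)"
  unfolding is_ring_hom_def[of "mpoly_subst \<phi> \<sigma>"]
  by (auto simp: mpoly_subst_zero mpoly_subst_one mpoly_subst_add mpoly_subst_mult)

definition mvar :: "nat \<Rightarrow> mpoly" where "mvar i = single (single i 1) 1"
definition mconst :: "complex \<Rightarrow> mpoly" where "mconst c = single 0 c"

lemma is_ring_hom_mconst: "is_ring_hom mconst"
  by (auto simp: is_ring_hom_def mconst_def single_add mult_single)

lemma mvar_power: "mvar i ^ k = single (single i k) 1"
  by (induction k) (auto simp: mvar_def mult_single single_add[symmetric] add.commute)

lemma prod_single_eq: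
  fixes f :: "'c \<Rightarrow> 'a::comm_monoid_add" and g :: "'c \<Rightarrow> 'b::comm_semiring_1"
  shows "(\<Prod>i\<in>A. single (f i) (g i)) = single (\<Sum>i\<in>A. f i) (\<Prod>i\<in>A. g i)"
  by (induction A rule: infinite_finite_induct) (auto simp: mult_single)

lemma monom_eval_mvar: "monom_eval mvar \<alpha> = single \<alpha> 1"
proof -
  have "monom_eval mvar \<alpha> = (\<Prod>i\<in>keys \<alpha>. single (single i (lookup \<alpha> i)) 1)"
    by (simp add: monom_eval_def mvar_power)
  also have "\<dots> = single (\<Sum>i\<in>keys \<alpha>. single i (lookup \<alpha> i)) 1"
    by (simp add: prod_single_eq)
  also have "(\<Sum>i\<in>keys \<alpha>. single i (lookup \<alpha> i)) = \<alpha>"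
    by (rule poly_mapping_eq_sum_keys[symmetric])
  finally show ?thesis .
qed

lemma mpoly_subst_mconst_mvar: "mpoly_subst mconst mvar p = p"
proof -
  have "mpoly_subst mconst mvar p = (\<Sum>\<alpha>\<in>keys p. single \<alpha> (lookup p \<alpha>))"
    by (simp add: mpoly_subst_def monom_eval_mvar mconst_def mult_single)
  also have "\<dots> = p" by (rule poly_mapping_eq_sum_keys[symmetric])
  finally show ?thesis .
qed

lemma is_ring_hom_eq_mpoly_subst:
  fixes h :: "mpoly \<Rightarrow> 'b::comm_ring_1"
  assumes "is_ring_hom h"
  shows "h p = mpoly_subst (h \<circ> mconst) (h \<circ> mvar) p"
proof -
  have "h p = h (mpoly_subst mconst mvar p)" by (simp add: mpoly_subst_mconst_mvar)
  also have "\<dots> = (\<Sum>\<alpha>\<in>keys p. h (mconst (lookup p \<alpha>)) * h (monom_eval mvar \<alpha>))"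
    by (simp add: mpoly_subst_def is_ring_hom_sum[OF assms] is_ring_homD[OF assms])
  also have "\<dots> = mpoly_subst (h \<circ> mconst) (h \<circ> mvar) p"
    by (simp add: mpoly_subst_def monom_eval_def is_ring_hom_prod[OF assms] is_ring_hom_power[OF assms])
  finally show ?thesis .
qed

lemma is_ring_hom_eqI:
  fixes h k :: "mpoly \<Rightarrow> 'b::comm_ring_1"
  assumes "is_ring_hom h" "is_ring_hom k" "\<And>c. h (mconst c) = k (mconst c)" "\<And>i. h (mvar i) = k (mvar i)"
  shows "h p = k p"
  using is_ring_hom_eq_mpoly_subst[OF assms(1), of p] is_ring_hom_eq_mpoly_subst[OF assms(2), of p] assms(3,4)
  by (simp add: comp_def)

lemma mpoly_subst_mconst: "is_ring_hom \<phi> \<Longrightarrow> mpoly_subst \<phi> \<sigma> (mconst c) = \<phi> c"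
  by (simp add: mconst_def mpoly_subst_single)

lemma mpoly_subst_mvar: "is_ring_hom \<phi> \<Longrightarrow> mpoly_subst \<phi> \<sigma> (mvar i) = \<sigma> i"
  by (simp add: mvar_def mpoly_subst_single is_ring_homD monom_eval_def)

lemma map_poly_add_hom:
  assumes "\<And>a b. h (a + b) = h a + h b" "h 0 = 0"
  shows "map_poly h (p + q) = map_poly h p + map_poly h q"
  by (rule poly_eqI) (simp add: coeff_map_poly assms)

lemma map_poly_mult_hom:
  fixes h :: "'a::comm_ring_1 \<Rightarrow> 'b::comm_ring_1"
  assumes "\<And>a b. h (a + b) = h a + h b" "\<And>a b. h (a * b) = h a * h b" "h 0 = 0"
  shows "map_poly h (p * q) = map_poly h p * map_poly h q"
proof (rule poly_eqI)
  fix n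
  have hs: "h (sum f A) = (\<Sum>x\<in>A. h (f x))" for f :: "nat \<Rightarrow> 'a" and A
    by (induction A rule: infinite_finite_induct) (auto simp: assms)
  show "coeff (map_poly h (p * q)) n = coeff (map_poly h p * map_poly h q) n"
    by (simp add: coeff_map_poly assms coeff_mult hs)
qed

lemma is_ring_hom_map_poly: assumes "is_ring_hom h" shows "is_ring_hom (map_poly h)"
  unfolding is_ring_hom_def[of "map_poly h"]
  using map_poly_add_hom[of h] map_poly_mult_hom[of h] is_ring_homD[OF assms] by (auto simp: map_poly_1')

lemma is_ring_hom_poly: "is_ring_hom (\<lambda>q. poly q x)"
  by (auto simp: is_ring_hom_def)

section \<open>A uniform bound on radical exponents\<close>

lemma multiplicity_le_degree:
  fixes p Q :: "'a::field_gcd poly"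
  assumes "prime p" "Q \<noteq> 0"
  shows "multiplicity p Q \<le> degree Q"
proof -
  have "p \<noteq> 0" "\<not> is_unit p" using assms(1) by auto
  then have "1 \<le> degree p" by (auto simp: is_unit_iff_degree)
  then have "multiplicity p Q * 1 \<le> multiplicity p Q * degree p" by (rule mult_le_mono2)
  also have "\<dots> = degree (p ^ multiplicity p Q)" using \<open>p \<noteq> 0\<close> by (simp add: degree_power_eq)
  also have "\<dots> \<le> degree Q" by (rule dvd_imp_degree_le[OF multiplicity_dvd assms(2)])
  finally show ?thesis by simp
qed

lemma dvd_power_degree:
  fixes P Q :: "'a::field_gcd poly"
  assumes "Q \<noteq> 0" "Q dvd P ^ k"
  shows "Q dvd P ^ degree Q"
proof (cases "P = 0")
  case True
  then show ?thesis
    using assms(1) by (cases "degree Q = 0") (auto simp: is_unit_iff_degree zero_power)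
next
  case False
  show ?thesis
  proof (rule multiplicity_le_imp_dvd[OF assms(1)])
    fix p :: "'a poly" assume p: "prime p"
    show "multiplicity p Q \<le> multiplicity p (P ^ degree Q)"
    proof (cases "p dvd P")
      case True
      then have "1 \<le> multiplicity p P"
        using False p by (simp add: multiplicity_gt_zero_iff Suc_le_eq)
      then have "degree Q \<le> multiplicity p (P ^ degree Q)"
        using p False by (simp add: prime_elem_multiplicity_power_distrib)
      then show ?thesis using multiplicity_le_degree[OF p assms(1)] by simp
    next
      case False
      then have "\<not> p dvd Q" using assms(2) p by (meson dvd_trans prime_dvd_power)
      then show ?thesis using p assms(1) by (simp add: not_dvd_imp_multiplicity_0)
    qed
  qed
qed

lemma digit_sum_less:
  fixes a :: "nat \<Rightarrow> nat"
  assumes "\<forall>i<n. a i < B"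
  shows "(\<Sum>i<n. a i * B ^ i) < B ^ n"
  using assms
proof (induction n)
  case 0
  then show ?case by simp
next
  case (Suc n)
  have S: "(\<Sum>i<n. a i * B ^ i) < B ^ n" using Suc by auto
  have an: "a n + 1 \<le> B" using Suc.prems by auto
  have "(\<Sum>i<Suc n. a i * B ^ i) = (\<Sum>i<n. a i * B ^ i) + a n * B ^ n" by simp
  also have "\<dots> < B ^ n + a n * B ^ n" using S by simp
  also have "\<dots> = (a n + 1) * B ^ n" by simp
  also have "\<dots> \<le> B * B ^ n" using an by (rule mult_right_mono) simp
  finally show ?case by simp
qed

lemma digit_sum_inj:
  fixes a b :: "nat \<Rightarrow> nat"
  assumes "\<forall>i<n. a i < B" "\<forall>i<n. b i < B" "(\<Sum>i<n. a i * B ^ i) = (\<Sum>i<n. b i * B ^ i)"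
  shows "\<forall>i<n. a i = b i"
  using assms
proof (induction n)
  case 0
  then show ?case by simp
next
  case (Suc n)
  let ?Sa = "\<Sum>i<n. a i * B ^ i" and ?Sb = "\<Sum>i<n. b i * B ^ i"
  have Sa: "?Sa < B ^ n" using Suc.prems by (intro digit_sum_less) auto
  have Sb: "?Sb < B ^ n" using Suc.prems by (intro digit_sum_less) auto
  have "a n < B" using Suc.prems(1) by simp
  then have B0: "B > 0" by simp
  then have P: "B ^ n > 0" by simp
  have eq: "?Sa + a n * B ^ n = ?Sb + b n * B ^ n" using Suc.prems(3) by simp
  have "(?Sa + a n * B ^ n) div B ^ n = a n + ?Sa div B ^ n"
    using P by (intro div_mult_self1) simp
  then have 1: "(?Sa + a n * B ^ n) div B ^ n = a n" using Sa by (simp add: div_less)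
  have "(?Sb + b n * B ^ n) div B ^ n = b n + ?Sb div B ^ n"
    using P by (intro div_mult_self1) simp
  then have 2: "(?Sb + b n * B ^ n) div B ^ n = b n" using Sb by (simp add: div_less)
  have abn: "a n = b n" using eq 1 2 by simp
  then have "?Sa = ?Sb" using eq by simp
  then have IH: "\<forall>i<n. a i = b i"
    using Suc.IH[OF _ _ \<open>?Sa = ?Sb\<close>] Suc.prems(1,2) by simp
  show ?case
  proof (intro allI impI)
    fix i assume "i < Suc n"
    then consider "i < n" | "i = n" by linarith
    then show "a i = b i" using IH abn by cases auto
  qed
qed

lemma degree_sum_dominant:
  fixes F :: "'c \<Rightarrow> 'a::comm_ring_1 poly"
  assumes "finite A" "a \<in> A" "\<forall>b\<in>A - {a}. degree (F b) < degree (F a)"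
  shows "degree (sum F A) = degree (F a) \<and> lead_coeff (sum F A) = lead_coeff (F a)"
proof (cases "A - {a} = {}")
  case True
  then have "A = {a}" using assms(2) by auto
  then show ?thesis by simp
next
  case False
  then obtain b where "b \<in> A - {a}" by auto
  then have pos: "degree (F a) > 0" using assms(3) by fastforce
  have R: "degree (sum F (A - {a})) < degree (F a)"
  proof -
    have "degree (sum F (A - {a})) \<le> degree (F a) - 1"
    proof (rule degree_sum_le)
      fix p assume "p \<in> A - {a}"
      then have "degree (F p) < degree (F a)" using assms by auto
      then show "degree (F p) \<le> degree (F a) - 1" by simp
    qed (use assms in auto)
    then show ?thesis using pos by simp
  qed
  have eq: "sum F A = F a + sum F (A - {a})"
    using assms(1,2) by (simp add: sum.remove)
  show ?thesis
    unfolding eq using R degree_add_eq_left[OF R] lead_coeff_add_le[OF R]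
    by (simp add: add.commute)
qed

definition radix_weight :: "nat \<Rightarrow> (nat \<Rightarrow>\<^sub>0 nat) \<Rightarrow> nat" where
  "radix_weight B \<alpha> = (\<Sum>i\<in>keys \<alpha>. lookup \<alpha> i * B ^ i)"

lemma radix_weight_superset: "finite A \<Longrightarrow> keys \<alpha> \<subseteq> A \<Longrightarrow> radix_weight B \<alpha> = (\<Sum>i\<in>A. lookup \<alpha> i * B ^ i)"
  unfolding radix_weight_def by (rule sum.mono_neutral_left) (auto simp: in_keys_iff)

lemma radix_weight_inj:
  assumes "keys \<alpha> \<subseteq> {..<n}" "keys \<beta> \<subseteq> {..<n}" "\<forall>i. lookup \<alpha> i < B" "\<forall>i. lookup \<beta> i < B"
    and "radix_weight B \<alpha> = radix_weight B \<beta>"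
  shows "\<alpha> = \<beta>"
proof -
  have "(\<Sum>i<n. lookup \<alpha> i * B ^ i) = (\<Sum>i<n. lookup \<beta> i * B ^ i)"
    using assms radix_weight_superset[of "{..<n}" \<alpha> B] radix_weight_superset[of "{..<n}" \<beta> B] by simp
  then have "\<forall>i<n. lookup \<alpha> i = lookup \<beta> i"
    using digit_sum_inj[of n "lookup \<alpha>" B "lookup \<beta>"] assms(3,4) by blast
  moreover have "\<forall>i. i \<ge> n \<longrightarrow> lookup \<alpha> i = 0 \<and> lookup \<beta> i = 0"
    using assms(1,2) by (auto simp: in_keys_iff)
  ultimately show ?thesis
    by (intro poly_mapping_eqI) (metis not_le)
qed

definition mpoly_eval :: "(nat \<Rightarrow> complex) \<Rightarrow> mpoly \<Rightarrow> complex" where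
  "mpoly_eval a = mpoly_subst id a"

lemma is_ring_hom_mpoly_eval: "is_ring_hom (mpoly_eval a)"
  unfolding mpoly_eval_def by (rule is_ring_hom_mpoly_subst[OF is_ring_hom_id])

lemma mpoly_eval_single: "mpoly_eval a (single \<alpha> c) = c * monom_eval a \<alpha>"
  unfolding mpoly_eval_def by (simp add: mpoly_subst_single[OF is_ring_hom_id])

lemma ex_vars_bound:
  assumes "finite K"
  shows "\<exists>n. \<forall>\<alpha>\<in>K. keys (\<alpha> :: nat \<Rightarrow>\<^sub>0 nat) \<subseteq> {..<n}"
proof -
  have "finite (\<Union>\<alpha>\<in>K. keys \<alpha>)" using assms by simp
  then obtain n where "\<forall>i\<in>(\<Union>\<alpha>\<in>K. keys \<alpha>). i < n"
    by (metis finite_nat_set_iff_bounded)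
  then show ?thesis by auto
qed

lemma ex_exponent_bound:
  assumes "finite K"
  shows "\<exists>B. \<forall>\<alpha>\<in>K. \<forall>i. lookup (\<alpha> :: nat \<Rightarrow>\<^sub>0 nat) i < B"
proof -
  have "finite (\<Union>\<alpha>\<in>K. lookup \<alpha> ` keys \<alpha>)" using assms by simp
  then obtain B where B: "\<forall>e\<in>(\<Union>\<alpha>\<in>K. lookup \<alpha> ` keys \<alpha>). e < B"
    by (metis finite_nat_set_iff_bounded)
  have "lookup \<alpha> i < Suc B" if "\<alpha> \<in> K" for \<alpha> i
  proof (cases "i \<in> keys \<alpha>")
    case True
    then have "lookup \<alpha> i < B" using B that by blast
    then show ?thesis by simp
  qed (simp add: in_keys_iff)
  then show ?thesis by blast
qed

text \<open>The Kronecker substitution \<open>x\<^sub>i \<mapsto> y\<^bsup>B^i\<^esup>\<close> maps distinct monomials with exponents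
  below \<open>B\<close> to distinct powers of \<open>y\<close>.\<close>

lemma mpoly_eq_0_if_eval_eq_0:
  assumes "\<forall>a. mpoly_eval a p = 0"
  shows "p = 0"
proof (rule ccontr)
  assume p0: "p \<noteq> 0"
  obtain n where n: "\<forall>\<alpha>\<in>keys p. keys \<alpha> \<subseteq> {..<n}" using ex_vars_bound[OF finite_keys] by blast
  obtain B where B: "\<forall>\<alpha>\<in>keys p. \<forall>i. lookup \<alpha> i < B" using ex_exponent_bound[OF finite_keys] by blast
  define P :: "complex poly" where "P = (\<Sum>\<alpha>\<in>keys p. monom (lookup p \<alpha>) (radix_weight B \<alpha>))"
  have evP: "mpoly_eval (\<lambda>i. y ^ (B ^ i)) p = poly P y" for y
  proof -
    have me: "monom_eval (\<lambda>i. y ^ (B ^ i)) \<alpha> = y ^ radix_weight B \<alpha>" for \<alpha>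
      by (simp add: monom_eval_def radix_weight_def power_sum power_mult[symmetric] mult.commute)
    have "mpoly_eval (\<lambda>i. y ^ (B ^ i)) p = (\<Sum>\<alpha>\<in>keys p. mpoly_eval (\<lambda>i. y ^ (B ^ i)) (single \<alpha> (lookup p \<alpha>)))"
      by (subst poly_mapping_eq_sum_keys[of p]) (simp add: is_ring_hom_sum[OF is_ring_hom_mpoly_eval])
    also have "\<dots> = poly P y"
      by (simp add: mpoly_eval_single me P_def poly_sum poly_monom)
    finally show ?thesis .
  qed
  obtain \<alpha>0 where a0: "\<alpha>0 \<in> keys p" using p0
    by (metis ex_in_conv keys_eq_empty)
  have "coeff P (radix_weight B \<alpha>0) = (\<Sum>\<alpha>\<in>keys p. if radix_weight B \<alpha> = radix_weight B \<alpha>0 then lookup p \<alpha> else 0)"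
    by (simp add: P_def coeff_sum coeff_monom)
  also have "\<dots> = (\<Sum>\<alpha>\<in>keys p. if \<alpha> = \<alpha>0 then lookup p \<alpha> else 0)"
  proof (rule sum.cong)
    fix \<alpha> assume "\<alpha> \<in> keys p"
    then have "radix_weight B \<alpha> = radix_weight B \<alpha>0 \<longleftrightarrow> \<alpha> = \<alpha>0"
      using radix_weight_inj[of \<alpha> n \<alpha>0 B] n B a0 by auto
    then show "(if radix_weight B \<alpha> = radix_weight B \<alpha>0 then lookup p \<alpha> else 0) = (if \<alpha> = \<alpha>0 then lookup p \<alpha> else 0)"
      by simp
  qed simp
  also have "\<dots> = lookup p \<alpha>0" using a0 by simp
  finally have "coeff P (radix_weight B \<alpha>0) \<noteq> 0" using a0 by (simp add: in_keys_iff)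
  then have "P \<noteq> 0" by auto
  then have "finite {y. poly P y = 0}" by (rule poly_roots_finite)
  then obtain y where "poly P y \<noteq> 0"
    by (metis (mono_tags, lifting) UNIV_I infinite_UNIV_char_0 mem_Collect_eq subsetI finite_subset)
  then show False using assms evP by simp
qed

text \<open>The shear reuses \<open>x\<^sub>0\<close> as the new variable \<open>t\<close>: it substitutes \<open>x\<^sub>0 \<mapsto> t\<close> and
  \<open>x\<^sub>i \<mapsto> x\<^sub>i + t\<^bsup>B^i\<^esup>\<close> for \<open>i > 0\<close>. A monomial \<open>x\<^sup>\<alpha>\<close> then has \<open>t\<close>-degree
  \<open>radix_weight B \<alpha>\<close> with leading coefficient 1, and these degrees are distinct when all
  exponents are below \<open>B\<close>.\<close>

definition shear_var :: "nat \<Rightarrow> nat \<Rightarrow> mpoly poly" where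
  "shear_var B i = (if i = 0 then 0 else [:mvar i:]) + monom 1 (B ^ i)"

definition shear :: "nat \<Rightarrow> mpoly \<Rightarrow> mpoly poly" where
  "shear B = mpoly_subst (\<lambda>c. [:mconst c:]) (shear_var B)"

lemma is_ring_hom_const_mconst: "is_ring_hom (\<lambda>c. [:mconst c:])"
  using is_ring_hom_mconst by (auto simp: is_ring_hom_def)

lemma is_ring_hom_shear: "is_ring_hom (shear B)"
  unfolding shear_def by (rule is_ring_hom_mpoly_subst[OF is_ring_hom_const_mconst])

lemma shear_var_degree: assumes "B \<ge> 1" shows "degree (shear_var B i) = B ^ i \<and> lead_coeff (shear_var B i) = 1"
proof (cases "i = 0")
  case True then show ?thesis by (simp add: shear_var_def degree_monom_eq)
next
  case False
  have d: "degree [:mvar i:] < degree (monom (1::mpoly) (B ^ i))"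
    using assms by (simp add: degree_monom_eq)
  show ?thesis using False degree_add_eq_left[OF d] lead_coeff_add_le[OF d]
    by (simp add: shear_var_def add.commute degree_monom_eq)
qed

lemma monom_eval_shear_var:
  assumes "B \<ge> 1"
  shows "degree (monom_eval (shear_var B) \<alpha>) = radix_weight B \<alpha> \<and> lead_coeff (monom_eval (shear_var B) \<alpha>) = 1"
proof -
  have nz: "shear_var B i ^ k \<noteq> 0" for i k
    using shear_var_degree[OF assms, of i] by (metis leading_coeff_0_iff one_neq_zero power_not_zero)
  have lc: "coeff (shear_var B i) (B ^ i) = 1" for i using shear_var_degree[OF assms, of i] by metis
  have L: "lead_coeff (monom_eval (shear_var B) \<alpha>) = 1"
    by (simp add: monom_eval_def lead_coeff_prod lead_coeff_power shear_var_degree[OF assms] lc)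
  have s0: "shear_var B i \<noteq> 0" for i using shear_var_degree[OF assms, of i] by auto
  have dp: "degree (shear_var B i ^ k) = k * B ^ i" for i k
    using degree_power_eq[OF s0[of i], of k] shear_var_degree[OF assms, of i] by simp
  have "degree (monom_eval (shear_var B) \<alpha>) = (\<Sum>i\<in>keys \<alpha>. degree (shear_var B i ^ lookup \<alpha> i))"
    unfolding monom_eval_def by (rule degree_prod_eq_sum_degree) (use nz in auto)
  also have "\<dots> = radix_weight B \<alpha>" by (simp add: dp radix_weight_def)
  finally show ?thesis using L by simp
qed

lemma mconst_eq_0_iff: "mconst c = 0 \<longleftrightarrow> c = 0"
  by (metis mconst_def lookup_single_eq single_zero)

lemma shear_single:
  assumes "B \<ge> 1" "c \<noteq> 0"
  shows "degree (shear B (single \<alpha> c)) = radix_weight B \<alpha> \<and> lead_coeff (shear B (single \<alpha> c)) = mconst c"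
proof -
  have eq: "shear B (single \<alpha> c) = [:mconst c:] * monom_eval (shear_var B) \<alpha>"
    unfolding shear_def by (rule mpoly_subst_single[OF is_ring_hom_const_mconst])
  have cc: "mconst c \<noteq> 0" using assms by (simp add: mconst_eq_0_iff)
  have m0: "monom_eval (shear_var B) \<alpha> \<noteq> 0" using monom_eval_shear_var[OF assms(1), of \<alpha>] by auto
  have lc: "coeff (monom_eval (shear_var B) \<alpha>) (radix_weight B \<alpha>) = 1"
    using monom_eval_shear_var[OF assms(1), of \<alpha>] by metis
  show ?thesis unfolding eq
    using monom_eval_shear_var[OF assms(1), of \<alpha>] cc m0 lc
    by (simp add: degree_mult_eq lead_coeff_mult)
qed

lemma shear_lead_coeff:
  assumes "G \<noteq> 0" "\<forall>\<alpha>\<in>keys G. keys \<alpha> \<subseteq> {..<n}" "\<forall>\<alpha>\<in>keys G. \<forall>i. lookup \<alpha> i < B"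
  shows "\<exists>\<alpha>\<in>keys G. degree (shear B G) = radix_weight B \<alpha> \<and> lead_coeff (shear B G) = mconst (lookup G \<alpha>)"
proof -
  obtain \<alpha>0 where a0: "\<alpha>0 \<in> keys G" using assms(1) by (metis ex_in_conv keys_eq_empty)
  have B1: "B \<ge> 1" using assms(3) a0 by (metis less_one not_le not_less_zero)
  have fin: "finite (radix_weight B ` keys G)" by simp
  have ne: "radix_weight B ` keys G \<noteq> {}" using a0 by auto
  obtain \<alpha>m where am: "\<alpha>m \<in> keys G" "radix_weight B \<alpha>m = Max (radix_weight B ` keys G)"
    using Max_in[OF fin ne] by auto
  have lt: "\<forall>\<beta>\<in>keys G - {\<alpha>m}. radix_weight B \<beta> < radix_weight B \<alpha>m"
  proof
    fix \<beta> assume b: "\<beta> \<in> keys G - {\<alpha>m}"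
    have "radix_weight B \<beta> \<le> radix_weight B \<alpha>m" using am b fin by simp
    moreover have "radix_weight B \<beta> \<noteq> radix_weight B \<alpha>m"
      using radix_weight_inj[of \<beta> n \<alpha>m B] b am assms(2,3) by auto
    ultimately show "radix_weight B \<beta> < radix_weight B \<alpha>m" by simp
  qed
  have PG: "shear B G = (\<Sum>\<beta>\<in>keys G. shear B (single \<beta> (lookup G \<beta>)))"
    by (subst poly_mapping_eq_sum_keys[of G]) (simp add: is_ring_hom_sum[OF is_ring_hom_shear])
  have "degree (\<Sum>\<beta>\<in>keys G. shear B (single \<beta> (lookup G \<beta>))) = degree (shear B (single \<alpha>m (lookup G \<alpha>m))) \<and>
        lead_coeff (\<Sum>\<beta>\<in>keys G. shear B (single \<beta> (lookup G \<beta>))) = lead_coeff (shear B (single \<alpha>m (lookup G \<alpha>m)))"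
    by (rule degree_sum_dominant) (use am lt shear_single[OF B1] in \<open>auto simp: in_keys_iff\<close>)
  note H = this[folded PG]
  have "lookup G \<alpha>m \<noteq> 0" using am(1) by (simp add: in_keys_iff)
  then have "degree (shear B G) = radix_weight B \<alpha>m \<and> lead_coeff (shear B G) = mconst (lookup G \<alpha>m)"
    using H shear_single[OF B1, of "lookup G \<alpha>m" \<alpha>m] by metis
  then show ?thesis using am(1) by blast
qed

definition unshear_coeffs :: "nat \<Rightarrow> mpoly \<Rightarrow> mpoly" where
  "unshear_coeffs B = mpoly_subst mconst (\<lambda>i. if i = 0 then mvar 0 else mvar i - mvar 0 ^ (B ^ i))"

definition unshear :: "nat \<Rightarrow> mpoly poly \<Rightarrow> mpoly" where
  "unshear B q = poly (map_poly (unshear_coeffs B) q) (mvar 0)"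

lemma is_ring_hom_unshear_coeffs: "is_ring_hom (unshear_coeffs B)"
  unfolding unshear_coeffs_def by (rule is_ring_hom_mpoly_subst[OF is_ring_hom_mconst])

lemma is_ring_hom_unshear: "is_ring_hom (unshear B)"
proof -
  have "unshear B = (\<lambda>q. poly q (mvar 0)) \<circ> map_poly (unshear_coeffs B)"
    by (auto simp: unshear_def fun_eq_iff)
  then show ?thesis using is_ring_hom_comp[OF is_ring_hom_map_poly[OF is_ring_hom_unshear_coeffs] is_ring_hom_poly] by simp
qed

lemma unshear_coeffs_mconst: "unshear_coeffs B (mconst c) = mconst c"
  unfolding unshear_coeffs_def by (rule mpoly_subst_mconst[OF is_ring_hom_mconst])

lemma map_poly_const: "h 0 = 0 \<Longrightarrow> map_poly h [:a:] = [:h a:]"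
  by (cases "a = 0") (simp_all add: map_poly_pCons)

lemma unshear_shear: "unshear B (shear B p) = p"
proof -
  have "(unshear B \<circ> shear B) p = id p"
  proof (rule is_ring_hom_eqI[of "unshear B \<circ> shear B" id])
    show "is_ring_hom (unshear B \<circ> shear B)" by (rule is_ring_hom_comp[OF is_ring_hom_shear is_ring_hom_unshear])
    show "is_ring_hom (id :: mpoly \<Rightarrow> mpoly)" by (rule is_ring_hom_id)
    fix c show "(unshear B \<circ> shear B) (mconst c) = id (mconst c)"
      by (simp add: shear_def mpoly_subst_mconst[OF is_ring_hom_const_mconst] unshear_def unshear_coeffs_mconst map_poly_const is_ring_homD(1)[OF is_ring_hom_unshear_coeffs])
  next
    fix i
    have t0: "unshear_coeffs B 0 = 0" "unshear_coeffs B 1 = 1" using is_ring_homD[OF is_ring_hom_unshear_coeffs] by auto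
    have ti: "unshear_coeffs B (mvar i) = (if i = 0 then mvar 0 else mvar i - mvar 0 ^ (B ^ i))"
      unfolding unshear_coeffs_def by (rule mpoly_subst_mvar[OF is_ring_hom_mconst])
    show "(unshear B \<circ> shear B) (mvar i) = id (mvar i)"
      using ti by (simp add: shear_def mpoly_subst_mvar[OF is_ring_hom_const_mconst] unshear_def shear_var_def
          is_ring_homD(3)[OF is_ring_hom_map_poly[OF is_ring_hom_unshear_coeffs]] map_poly_monom t0 poly_monom map_poly_const)
  qed
  then show ?thesis by simp
qed

definition eval_coeffs :: "(nat \<Rightarrow> complex) \<Rightarrow> mpoly poly \<Rightarrow> complex poly" where
  "eval_coeffs a = map_poly (mpoly_eval a)"

lemma is_ring_hom_eval_coeffs: "is_ring_hom (eval_coeffs a)"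
  unfolding eval_coeffs_def by (rule is_ring_hom_map_poly[OF is_ring_hom_mpoly_eval])

lemma mpoly_eval_mconst: "mpoly_eval a (mconst c) = c"
  unfolding mpoly_eval_def by (rule mpoly_subst_mconst[OF is_ring_hom_id, simplified])

lemma coeff_eval_coeffs: "coeff (eval_coeffs a H) j = mpoly_eval a (coeff H j)"
  by (simp add: eval_coeffs_def coeff_map_poly is_ring_homD(1)[OF is_ring_hom_mpoly_eval])

lemma degree_eval_coeffs_le: "degree (eval_coeffs a H) \<le> degree H"
  by (rule degree_le) (simp add: coeff_eval_coeffs coeff_eq_0 is_ring_homD(1)[OF is_ring_hom_mpoly_eval])

lemma degree_eval_coeffs_mconst_lead:
  assumes "lead_coeff H = mconst c" "c \<noteq> 0"
  shows "degree (eval_coeffs a H) = degree H"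
proof -
  have "coeff (eval_coeffs a H) (degree H) \<noteq> 0"
    using assms by (simp add: coeff_eval_coeffs mpoly_eval_mconst)
  then have "degree H \<le> degree (eval_coeffs a H)" by (rule le_degree)
  then show ?thesis using degree_eval_coeffs_le[of a H] by simp
qed

lemma eq_0_if_eval_coeffs_eq_0:
  assumes "\<And>a. eval_coeffs a r = 0"
  shows "r = 0"
proof (rule poly_eqI)
  fix j
  have "mpoly_eval a (coeff r j) = 0" for a
    using arg_cong[OF assms[of a], of "\<lambda>p. coeff p j"] by (simp add: coeff_eval_coeffs)
  then show "coeff r j = coeff 0 j" using mpoly_eq_0_if_eval_eq_0 by simp
qed

text \<open>Specialising the coefficients preserves the degree of a polynomial with constant leading
  coefficient, so the univariate bound \<open>dvd_power_degree\<close> applies after every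
  specialisation; this forces the pseudo-remainder of \<open>F ^ degree H\<close> by \<open>H\<close> to vanish.\<close>

lemma smult_power_degree_dvd:
  fixes H F :: "mpoly poly"
  assumes lead: "lead_coeff H = mconst c" and c0: "c \<noteq> 0" and dvd: "H dvd F ^ k"
  shows "\<exists>e. H dvd smult (mconst c ^ e) (F ^ degree H)"
proof -
  define E where "E = degree H"
  have H0: "H \<noteq> 0" using lead c0 by (auto simp: mconst_eq_0_iff)
  obtain q r where qr: "pseudo_divmod (F ^ E) H = (q, r)"
    by (cases "pseudo_divmod (F ^ E) H") auto
  define e where "e = Suc (degree (F ^ E)) - degree H"
  have eq: "smult (mconst c ^ e) (F ^ E) = H * q + r"
    using pseudo_divmod(1)[OF H0 qr] lead by (simp add: e_def)
  have rdeg: "r = 0 \<or> degree r < E"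
    using pseudo_divmod(2)[OF H0 qr] by (simp add: E_def)
  have "eval_coeffs a r = 0" for a
  proof -
    let ?H = "eval_coeffs a H" and ?F = "eval_coeffs a F" and ?r = "eval_coeffs a r"
    have dH: "degree ?H = E" using degree_eval_coeffs_mconst_lead[OF lead c0] by (simp add: E_def)
    have "coeff ?H E \<noteq> 0"
      using lead c0 by (simp add: E_def coeff_eval_coeffs mpoly_eval_mconst)
    then have H0': "?H \<noteq> 0" by auto
    have "?H dvd ?F ^ k"
      using is_ring_hom_dvd[OF is_ring_hom_eval_coeffs dvd] is_ring_hom_power[OF is_ring_hom_eval_coeffs] by simp
    then have "?H dvd ?F ^ E" using dvd_power_degree[OF H0'] dH by metis
    moreover have "smult (c ^ e) (?F ^ E) = ?H * eval_coeffs a q + ?r"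
      using arg_cong[OF eq, of "eval_coeffs a"] is_ring_homD[OF is_ring_hom_eval_coeffs]
        is_ring_hom_power[OF is_ring_hom_eval_coeffs] is_ring_hom_power[OF is_ring_hom_mpoly_eval]
      by (simp add: eval_coeffs_def map_poly_smult is_ring_homD[OF is_ring_hom_mpoly_eval] mpoly_eval_mconst)
    ultimately have Hr: "?H dvd smult (c ^ e) (?F ^ E) - ?H * eval_coeffs a q"
      by (intro dvd_diff dvd_smult) auto
    also have "smult (c ^ e) (?F ^ E) - ?H * eval_coeffs a q = ?r"
      using \<open>smult (c ^ e) (?F ^ E) = ?H * eval_coeffs a q + ?r\<close> by simp
    finally have Hr: "?H dvd ?r" .
    show "?r = 0"
    proof (rule ccontr)
      assume "?r \<noteq> 0"
      then have "E \<le> degree ?r" "r \<noteq> 0" using dvd_imp_degree_le[OF Hr] dH by (auto simp: eval_coeffs_def)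
      then show False using rdeg degree_eval_coeffs_le[of a r] by simp
    qed
  qed
  then have "r = 0" by (rule eq_0_if_eval_coeffs_eq_0)
  then have "smult (mconst c ^ e) (F ^ E) = H * q" using eq by simp
  then show ?thesis unfolding E_def by (metis dvd_triv_left)
qed

lemma dvd_power_radix_weight:
  fixes G f :: mpoly
  assumes G0: "G \<noteq> 0" and vars: "\<forall>\<alpha>\<in>keys G. keys \<alpha> \<subseteq> {..<n}"
    and exps: "\<forall>\<alpha>\<in>keys G. \<forall>i. lookup \<alpha> i < B" and dvd: "G dvd f ^ k"
  shows "\<exists>\<alpha>\<in>keys G. G dvd f ^ radix_weight B \<alpha>"
proof -
  obtain \<alpha> where \<alpha>: "\<alpha> \<in> keys G" "degree (shear B G) = radix_weight B \<alpha>"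
    "lead_coeff (shear B G) = mconst (lookup G \<alpha>)"
    using shear_lead_coeff[OF G0 vars exps] by blast
  define c where "c = lookup G \<alpha>"
  have c0: "c \<noteq> 0" using \<alpha>(1) by (simp add: c_def in_keys_iff)
  have "shear B G dvd shear B f ^ k"
    using is_ring_hom_dvd[OF is_ring_hom_shear dvd] is_ring_hom_power[OF is_ring_hom_shear] by simp
  then obtain e where "shear B G dvd smult (mconst c ^ e) (shear B f ^ radix_weight B \<alpha>)"
    using smult_power_degree_dvd[of "shear B G" c] \<alpha> c0 by (auto simp: c_def)
  then have "unshear B (shear B G) dvd unshear B (smult (mconst c ^ e) (shear B f ^ radix_weight B \<alpha>))"
    by (rule is_ring_hom_dvd[OF is_ring_hom_unshear])
  also have "unshear B (smult (mconst c ^ e) (shear B f ^ radix_weight B \<alpha>))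
      = unshear_coeffs B (mconst c ^ e) * unshear B (shear B (f ^ radix_weight B \<alpha>))"
    unfolding unshear_def is_ring_hom_power[OF is_ring_hom_shear]
    by (subst map_poly_smult) (auto simp: is_ring_homD[OF is_ring_hom_unshear_coeffs])
  also have "\<dots> = mconst (c ^ e) * f ^ radix_weight B \<alpha>"
    by (simp add: unshear_shear unshear_coeffs_mconst is_ring_hom_power[OF is_ring_hom_unshear_coeffs]
        flip: is_ring_hom_power[OF is_ring_hom_mconst])
  finally have "G dvd mconst (inverse (c ^ e)) * (mconst (c ^ e) * f ^ radix_weight B \<alpha>)"
    by (simp add: unshear_shear)
  moreover have "mconst (inverse (c ^ e)) * mconst (c ^ e) = 1"
    using c0 by (simp add: mconst_def mult_single)
  ultimately have "G dvd f ^ radix_weight B \<alpha>"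
    by (simp flip: mult.assoc)
  then show ?thesis using \<alpha>(1) by blast
qed

section \<open>Supports of quotients\<close>

definition weighted_degree :: "(nat \<Rightarrow> nat) \<Rightarrow> (nat \<Rightarrow>\<^sub>0 nat) \<Rightarrow> nat" where
  "weighted_degree \<omega> \<alpha> = (\<Sum>i\<in>keys \<alpha>. lookup \<alpha> i * \<omega> i)"

definition grade :: "(nat \<Rightarrow> nat) \<Rightarrow> mpoly \<Rightarrow> mpoly poly" where
  "grade \<omega> = mpoly_subst (\<lambda>c. [:mconst c:]) (\<lambda>i. monom (mvar i) (\<omega> i))"

lemma is_ring_hom_grade: "is_ring_hom (grade \<omega>)"
  unfolding grade_def by (rule is_ring_hom_mpoly_subst[OF is_ring_hom_const_mconst])

lemma prod_monom: "(\<Prod>i\<in>A. monom (f i) (g i)) = monom (\<Prod>i\<in>A. f i) (\<Sum>i\<in>A. g i)"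
  by (induction A rule: infinite_finite_induct) (auto simp: mult_monom)

lemma grade_single: "grade \<omega> (single \<alpha> c) = monom (single \<alpha> c) (weighted_degree \<omega> \<alpha>)"
proof -
  have "grade \<omega> (single \<alpha> c) = [:mconst c:] * monom_eval (\<lambda>i. monom (mvar i) (\<omega> i)) \<alpha>"
    unfolding grade_def by (rule mpoly_subst_single[OF is_ring_hom_const_mconst])
  also have "monom_eval (\<lambda>i. monom (mvar i) (\<omega> i)) \<alpha> = monom (monom_eval mvar \<alpha>) (weighted_degree \<omega> \<alpha>)"
    by (simp add: monom_eval_def monom_power prod_monom weighted_degree_def mult.commute)
  also have "[:mconst c:] * monom (monom_eval mvar \<alpha>) (weighted_degree \<omega> \<alpha>) = monom (single \<alpha> c) (weighted_degree \<omega> \<alpha>)"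
    by (simp add: monom_eval_mvar mconst_def mult_single smult_monom)
  finally show ?thesis .
qed

lemma grade_expand: "grade \<omega> p = (\<Sum>\<alpha>\<in>keys p. monom (single \<alpha> (lookup p \<alpha>)) (weighted_degree \<omega> \<alpha>))"
  by (subst poly_mapping_eq_sum_keys[of p]) (simp add: is_ring_hom_sum[OF is_ring_hom_grade] grade_single)

lemma grade_key_le:
  assumes "\<alpha> \<in> keys p"
  shows "weighted_degree \<omega> \<alpha> \<le> degree (grade \<omega> p) \<and> grade \<omega> p \<noteq> 0"
proof -
  have "lookup (coeff (grade \<omega> p) (weighted_degree \<omega> \<alpha>)) \<alpha> = (\<Sum>\<beta>\<in>keys p. if weighted_degree \<omega> \<beta> = weighted_degree \<omega> \<alpha> \<and> \<beta> = \<alpha> then lookup p \<beta> else 0)"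
    by (simp add: grade_expand coeff_sum lookup_sum lookup_single when_def)
       (rule sum.cong, auto simp: lookup_single when_def)
  also have "\<dots> = (\<Sum>\<beta>\<in>keys p. if \<beta> = \<alpha> then lookup p \<beta> else 0)" by (rule sum.cong) auto
  also have "\<dots> = lookup p \<alpha>" using assms by (simp add: sum.delta)
  finally have "coeff (grade \<omega> p) (weighted_degree \<omega> \<alpha>) \<noteq> 0" using assms by (auto simp: in_keys_iff)
  then show ?thesis by (auto intro: le_degree)
qed

lemma degree_grade_le:
  assumes "\<forall>\<alpha>\<in>keys p. weighted_degree \<omega> \<alpha> \<le> N"
  shows "degree (grade \<omega> p) \<le> N"
  unfolding grade_expand
  by (rule degree_sum_le) (use assms in \<open>auto intro: order.trans[OF degree_monom_le]\<close>)

lemma weighted_degree_factor_le: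
  fixes F G Q :: mpoly
  assumes "F = G * Q" "G \<noteq> 0" "\<forall>\<alpha>\<in>keys F. weighted_degree \<omega> \<alpha> \<le> N"
  shows "\<forall>\<alpha>\<in>keys Q. weighted_degree \<omega> \<alpha> \<le> N"
proof
  fix \<alpha> assume a: "\<alpha> \<in> keys Q"
  obtain \<beta> where b: "\<beta> \<in> keys G" using assms(2) by (metis ex_in_conv keys_eq_empty)
  have TQ: "weighted_degree \<omega> \<alpha> \<le> degree (grade \<omega> Q)" "grade \<omega> Q \<noteq> 0" using grade_key_le[OF a] by auto
  have TG: "grade \<omega> G \<noteq> 0" using grade_key_le[OF b] by auto
  have "grade \<omega> F = grade \<omega> G * grade \<omega> Q" using assms(1) is_ring_homD(4)[OF is_ring_hom_grade] by simp
  then have "degree (grade \<omega> F) = degree (grade \<omega> G) + degree (grade \<omega> Q)"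
    using TQ TG by (simp add: degree_mult_eq)
  moreover have "degree (grade \<omega> F) \<le> N" by (rule degree_grade_le[OF assms(3)])
  ultimately show "weighted_degree \<omega> \<alpha> \<le> N" using TQ by simp
qed

lemma weighted_degree_vars: "weighted_degree (\<lambda>i. if i < n then 0 else 1) \<alpha> = 0 \<longleftrightarrow> keys \<alpha> \<subseteq> {..<n}"
proof -
  have "weighted_degree (\<lambda>i. if i < n then 0 else 1) \<alpha> = 0 \<longleftrightarrow> (\<forall>i\<in>keys \<alpha>. lookup \<alpha> i * (if i < n then 0 else 1) = 0)"
    unfolding weighted_degree_def by (rule sum_eq_0_iff) simp
  also have "\<dots> \<longleftrightarrow> (\<forall>i\<in>keys \<alpha>. i < n)"
    by (intro ball_cong refl) (simp add: in_keys_iff)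
  also have "\<dots> \<longleftrightarrow> keys \<alpha> \<subseteq> {..<n}" by auto
  finally show ?thesis .
qed

lemma lookup_le_total_degree: "lookup \<alpha> i \<le> weighted_degree (\<lambda>i. 1) \<alpha>"
proof (cases "i \<in> keys \<alpha>")
  case True
  have "(\<lambda>j. lookup \<alpha> j * 1) i \<le> (\<Sum>j\<in>keys \<alpha>. lookup \<alpha> j * 1)"
    by (rule member_le_sum) (use True in auto)
  then show ?thesis unfolding weighted_degree_def by simp
next
  case False then show ?thesis by (simp add: in_keys_iff)
qed

definition monomials_upto :: "nat \<Rightarrow> nat \<Rightarrow> (nat \<Rightarrow>\<^sub>0 nat) set" where
  "monomials_upto n N = {\<alpha>. keys \<alpha> \<subseteq> {..<n} \<and> weighted_degree (\<lambda>i. 1) \<alpha> \<le> N}"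

lemma finite_monomials_upto: "finite (monomials_upto n N)"
proof -
  let ?S = "{f. \<forall>x. (x \<in> {..<n} \<longrightarrow> f x \<in> {0..N}) \<and> (x \<notin> {..<n} \<longrightarrow> f x = (0::nat))}"
  have fS: "finite ?S" by (rule finite_set_of_finite_funs) auto
  have "monomials_upto n N \<subseteq> lookup -` ?S"
  proof
    fix \<alpha> assume "\<alpha> \<in> monomials_upto n N"
    then have k: "keys \<alpha> \<subseteq> {..<n}" and w: "weighted_degree (\<lambda>i. 1) \<alpha> \<le> N" by (auto simp: monomials_upto_def)
    have le: "lookup \<alpha> x \<le> N" for x using lookup_le_total_degree[of \<alpha> x] w by linarith
    have z: "lookup \<alpha> x = 0" if "x \<notin> {..<n}" for x
      using k that by (metis in_keys_iff subsetD)
    show "\<alpha> \<in> lookup -` ?S" using le z by simp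
  qed
  moreover have "finite (lookup -` ?S)"
  proof (rule finite_vimageI[OF fS], rule injI)
    fix x y :: "nat \<Rightarrow>\<^sub>0 nat" assume "lookup x = lookup y"
    then show "x = y" by (intro poly_mapping_eqI) simp
  qed
  ultimately show ?thesis by (rule finite_subset)
qed

text \<open>Grading by weight 0 on the variables \<open>x\<^sub>i\<close>, \<open>i < n\<close>, and 1 on the other variables shows that
  a factor of a polynomial in these variables involves no others.\<close>

lemma keys_factor_subset_monomials_upto:
  fixes F G Q :: mpoly
  assumes "F = G * Q" "G \<noteq> 0" "\<forall>\<alpha>\<in>keys F. \<alpha> \<in> monomials_upto n N"
  shows "keys Q \<subseteq> monomials_upto n N"
proof -
  have "\<forall>\<alpha>\<in>keys Q. weighted_degree (\<lambda>i. 1) \<alpha> \<le> N"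
    by (rule weighted_degree_factor_le[OF assms(1,2)]) (use assms(3) in \<open>auto simp: monomials_upto_def\<close>)
  moreover have "\<forall>\<alpha>\<in>keys Q. weighted_degree (\<lambda>i. if i < n then 0 else 1) \<alpha> \<le> 0"
    by (rule weighted_degree_factor_le[OF assms(1,2)]) (use assms(3) weighted_degree_vars in \<open>auto simp: monomials_upto_def\<close>)
  ultimately show ?thesis using weighted_degree_vars by (auto simp: monomials_upto_def)
qed

section \<open>Continuity of quotients\<close>

definition l1_norm :: "mpoly \<Rightarrow> real" where
  "l1_norm p = (\<Sum>\<alpha>\<in>keys p. cmod (lookup p \<alpha>))"

lemma l1_norm_superset: "finite A \<Longrightarrow> keys p \<subseteq> A \<Longrightarrow> l1_norm p = (\<Sum>\<alpha>\<in>A. cmod (lookup p \<alpha>))"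
  unfolding l1_norm_def by (rule sum.mono_neutral_left) (auto simp: in_keys_iff)

lemma l1_norm_ge_0: "l1_norm p \<ge> 0"
  unfolding l1_norm_def by (simp add: sum_nonneg)

lemma lookup_le_l1_norm: "cmod (lookup p \<alpha>) \<le> l1_norm p"
proof (cases "\<alpha> \<in> keys p")
  case True
  then show ?thesis unfolding l1_norm_def by (rule member_le_sum) auto
next
  case False then show ?thesis by (simp add: in_keys_iff l1_norm_ge_0)
qed

lemma l1_norm_add: "l1_norm (p + q) \<le> l1_norm p + l1_norm q"
proof -
  let ?A = "keys p \<union> keys q"
  have "l1_norm (p + q) = (\<Sum>\<alpha>\<in>?A. cmod (lookup p \<alpha> + lookup q \<alpha>))"
    using l1_norm_superset[of ?A "p + q"] keys_add[of p q] by (simp add: lookup_add)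
  also have "\<dots> \<le> (\<Sum>\<alpha>\<in>?A. cmod (lookup p \<alpha>) + cmod (lookup q \<alpha>))"
    by (rule sum_mono) (rule norm_triangle_ineq)
  also have "\<dots> = l1_norm p + l1_norm q"
    using l1_norm_superset[of ?A p] l1_norm_superset[of ?A q] by (simp add: sum.distrib)
  finally show ?thesis .
qed

lemma l1_norm_uminus: "l1_norm (- p) = l1_norm p"
proof -
  let ?A = "keys p \<union> keys (- p)"
  have "l1_norm (- p) = (\<Sum>\<alpha>\<in>?A. cmod (lookup (- p) \<alpha>))" by (rule l1_norm_superset) auto
  also have "\<dots> = (\<Sum>\<alpha>\<in>?A. cmod (lookup p \<alpha>))" by simp
  also have "\<dots> = l1_norm p" by (rule l1_norm_superset[symmetric]) auto
  finally show ?thesis .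
qed

lemma l1_norm_diff: "l1_norm (p - q) \<le> l1_norm p + l1_norm q"
  using l1_norm_add[of p "- q"] l1_norm_uminus[of q] by simp

lemma l1_norm_single: "l1_norm (single \<alpha> c) = cmod c"
  by (cases "c = 0") (simp_all add: l1_norm_def)

lemma l1_norm_sum: "l1_norm (sum f A) \<le> (\<Sum>x\<in>A. l1_norm (f x))"
proof (induction A rule: infinite_finite_induct)
  case (insert x F)
  then show ?case using l1_norm_add[of "f x" "sum f F"] by simp
qed (simp_all add: l1_norm_def)

lemma l1_norm_mult: "l1_norm (p * q) \<le> l1_norm p * l1_norm q"
proof -
  have "l1_norm (p * q) = l1_norm (\<Sum>a\<in>keys p. \<Sum>b\<in>keys q. single (a+b) (lookup p a * lookup q b))"
    by (subst mult_eq_sum_single[of "keys p" p "keys q" q]) auto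
  also have "\<dots> \<le> (\<Sum>a\<in>keys p. l1_norm (\<Sum>b\<in>keys q. single (a+b) (lookup p a * lookup q b)))" by (rule l1_norm_sum)
  also have "\<dots> \<le> (\<Sum>a\<in>keys p. \<Sum>b\<in>keys q. l1_norm (single (a+b) (lookup p a * lookup q b)))"
    by (rule sum_mono) (rule l1_norm_sum)
  also have "\<dots> = (\<Sum>a\<in>keys p. \<Sum>b\<in>keys q. cmod (lookup p a) * cmod (lookup q b))"
    by (simp add: l1_norm_single norm_mult)
  also have "\<dots> = l1_norm p * l1_norm q"
    by (simp add: l1_norm_def sum_distrib_left sum_distrib_right sum.swap[of _ "keys q" "keys p"])
  finally show ?thesis .
qed

lemma lookup_mult_Max_keys:
  fixes G q :: mpoly
  assumes "G \<noteq> 0" "\<forall>b\<in>keys q. b \<le> \<mu>"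
  shows "lookup (G * q) (Max (keys G) + \<mu>) = lookup G (Max (keys G)) * lookup q \<mu>"
proof -
  define \<beta> where "\<beta> = Max (keys G)"
  have \<beta>: "\<beta> \<in> keys G" using assms(1) by (simp add: \<beta>_def)
  have top: "a + b = \<beta> + \<mu> \<longleftrightarrow> a = \<beta> \<and> b = \<mu>" if "a \<in> keys G" "b \<in> insert \<mu> (keys q)" for a b
  proof -
    have "a \<le> \<beta>" "b \<le> \<mu>" using that assms(2) by (auto simp: \<beta>_def)
    then have lt: "a + b < \<beta> + \<mu>" if "a \<noteq> \<beta> \<or> b \<noteq> \<mu>"
      using that add_less_le_mono[of a \<beta> b \<mu>] add_le_less_mono[of a \<beta> b \<mu>] by (auto simp: order.order_iff_strict)
    show ?thesis
    proof
      assume "a + b = \<beta> + \<mu>"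
      then show "a = \<beta> \<and> b = \<mu>" using lt by fastforce
    qed simp
  qed
  have "lookup (G * q) (\<beta> + \<mu>)
      = (\<Sum>a\<in>keys G. \<Sum>b\<in>insert \<mu> (keys q). if a + b = \<beta> + \<mu> then lookup G a * lookup q b else 0)"
    by (rule lookup_mult_eq_sum) auto
  also have "\<dots> = (\<Sum>a\<in>keys G. \<Sum>b\<in>insert \<mu> (keys q). if a = \<beta> \<and> b = \<mu> then lookup G a * lookup q b else 0)"
    by (intro sum.cong refl) (simp add: top)
  also have "\<dots> = (\<Sum>a\<in>keys G. if a = \<beta> then lookup G a * lookup q \<mu> else 0)"
    by (intro sum.cong refl) (simp add: sum.delta)
  also have "\<dots> = lookup G \<beta> * lookup q \<mu>"
    using \<beta> by simp
  finally show ?thesis by (simp add: \<beta>_def)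
qed

text \<open>Multiplication by a fixed nonzero polynomial is injective, hence bounded below on every
  finite-dimensional space of polynomials; the proof peels off the largest monomial of the
  support, whose coefficient is read off from the largest monomial of the product.\<close>

lemma l1_norm_mult_bounded_below:
  fixes G :: mpoly
  assumes G0: "G \<noteq> 0" and "finite V"
  shows "\<exists>C>0. \<forall>q. keys q \<subseteq> V \<longrightarrow> l1_norm q \<le> C * l1_norm (G * q)"
  using \<open>finite V\<close>
proof (induction V rule: finite_remove_induct)
  case empty
  show ?case by (rule exI[of _ 1]) (auto simp: l1_norm_def)
next
  case (remove A)
  define \<mu> where "\<mu> = Max A"
  have \<mu>: "\<mu> \<in> A" using remove.hyps(1,2) by (simp add: \<mu>_def)
  obtain C' where C': "C' > 0" "\<forall>q. keys q \<subseteq> A - {\<mu>} \<longrightarrow> l1_norm q \<le> C' * l1_norm (G * q)"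
    using remove.IH[OF \<mu>] by blast
  define a where "a = lookup G (Max (keys G))"
  have "Max (keys G) \<in> keys G" using G0 by simp
  then have a0: "cmod a > 0" by (simp add: a_def in_keys_iff)
  define C where "C = C' * (1 + l1_norm G / cmod a) + 1 / cmod a"
  have "C' * (1 + l1_norm G / cmod a) > 0" using C'(1) a0 l1_norm_ge_0[of G] by (simp add: add_pos_nonneg)
  then have Cpos: "C > 0" using a0 by (simp add: C_def add_pos_pos)
  show ?case
  proof (intro exI[of _ C] conjI allI impI Cpos)
    fix q :: mpoly assume kq: "keys q \<subseteq> A"
    define t where "t = lookup q \<mu>"
    define q' where "q' = q - single \<mu> t"
    have kq': "keys q' \<subseteq> A - {\<mu>}"
      using kq by (auto simp: q'_def t_def in_keys_iff lookup_minus lookup_single when_def split: if_splits)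
    have "\<forall>b\<in>keys q. b \<le> \<mu>" using kq remove.hyps(1) by (auto simp: \<mu>_def)
    then have "a * t = lookup (G * q) (Max (keys G) + \<mu>)"
      using lookup_mult_Max_keys[OF G0] by (simp add: a_def t_def)
    then have "cmod a * cmod t \<le> l1_norm (G * q)" using lookup_le_l1_norm by (metis norm_mult)
    then have tb: "cmod t \<le> l1_norm (G * q) / cmod a" using a0 by (simp add: field_simps)
    have "l1_norm (G * q') \<le> l1_norm (G * q) + l1_norm (G * single \<mu> t)"
      using l1_norm_diff[of "G * q" "G * single \<mu> t"] by (simp add: q'_def right_diff_distrib)
    also have "l1_norm (G * single \<mu> t) \<le> l1_norm G * cmod t"
      using l1_norm_mult[of G "single \<mu> t"] by (simp add: l1_norm_single)
    finally have Gq': "l1_norm (G * q') \<le> l1_norm (G * q) + l1_norm G * cmod t" by simp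
    have "l1_norm q \<le> l1_norm q' + cmod t"
      using l1_norm_add[of q' "single \<mu> t"] by (simp add: q'_def l1_norm_single)
    also have "l1_norm q' \<le> C' * (l1_norm (G * q) + l1_norm G * cmod t)"
      using C' kq' Gq' by (meson mult_left_mono order.trans less_imp_le)
    also have "C' * (l1_norm (G * q) + l1_norm G * cmod t) + cmod t
        \<le> C' * (l1_norm (G * q) + l1_norm G * (l1_norm (G * q) / cmod a)) + l1_norm (G * q) / cmod a"
      using tb C'(1) l1_norm_ge_0[of G] by (intro add_mono mult_left_mono) auto
    also have "\<dots> = C * l1_norm (G * q)" by (simp add: C_def field_simps)
    finally show "l1_norm q \<le> C * l1_norm (G * q)" by simp
  qed
qed

lemma l1_norm_quotient_diff_le:
  fixes G G0 Q Q0 :: mpoly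
  assumes bound: "l1_norm (Q - Q0) \<le> C * l1_norm (G0 * (Q - Q0))" and "C \<ge> 0"
    and G: "l1_norm (G0 - G) \<le> \<phi>" "C * \<phi> \<le> 1/2" and F: "l1_norm (G * Q - G0 * Q0) \<le> \<psi>"
  shows "l1_norm (Q - Q0) \<le> 2 * C * (\<psi> + \<phi> * l1_norm Q0)"
proof -
  define D where "D = Q - Q0"
  have "G0 * D = G * D + (G0 - G) * D" by (simp add: algebra_simps)
  then have "l1_norm (G0 * D) \<le> l1_norm (G * D) + l1_norm (G0 - G) * l1_norm D"
    using l1_norm_add[of "G * D" "(G0 - G) * D"] l1_norm_mult[of "G0 - G" D] by simp
  also have "\<dots> \<le> l1_norm (G * D) + \<phi> * l1_norm D"
    using G(1) l1_norm_ge_0[of D] by (simp add: mult_right_mono)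
  finally have "l1_norm D \<le> C * l1_norm (G * D) + (C * \<phi>) * l1_norm D"
    using bound \<open>C \<ge> 0\<close> unfolding D_def by (smt (verit) mult_left_mono distrib_left mult.assoc)
  moreover have "(C * \<phi>) * l1_norm D \<le> 1/2 * l1_norm D"
    using G(2) l1_norm_ge_0[of D] by (rule mult_right_mono)
  ultimately have "l1_norm D \<le> 2 * C * l1_norm (G * D)" by simp
  moreover have "G * D = (G * Q - G0 * Q0) + (G0 - G) * Q0" by (simp add: D_def algebra_simps)
  then have "l1_norm (G * D) \<le> l1_norm (G * Q - G0 * Q0) + l1_norm (G0 - G) * l1_norm Q0"
    using l1_norm_add[of "G * Q - G0 * Q0" "(G0 - G) * Q0"] l1_norm_mult[of "G0 - G" Q0] by simp
  also have "\<dots> \<le> \<psi> + \<phi> * l1_norm Q0"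
    using F G(1) l1_norm_ge_0[of Q0] by (intro add_mono mult_right_mono)
  ultimately show ?thesis using \<open>C \<ge> 0\<close> unfolding D_def by (smt (verit) mult_left_mono)
qed

lemma keys_diff_subset: "keys ((p::mpoly) - q) \<subseteq> keys p \<union> keys q"
  by (auto simp: in_keys_iff lookup_minus)

lemma l1_norm_diff_le_sum:
  fixes p q :: mpoly
  assumes "finite K" "keys p \<subseteq> K" "keys q \<subseteq> K"
  shows "l1_norm (p - q) \<le> (\<Sum>\<alpha>\<in>K. cmod (lookup p \<alpha> - lookup q \<alpha>))"
proof -
  have "keys (p - q) \<subseteq> K" using keys_diff_subset[of p q] assms by auto
  then show ?thesis using l1_norm_superset[OF assms(1)] by (simp add: lookup_minus)
qed

lemma continuous_map_mult:
  fixes f g :: "'a \<Rightarrow> 'b::real_normed_algebra"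
  shows "continuous_map X euclidean f \<Longrightarrow> continuous_map X euclidean g \<Longrightarrow> continuous_map X euclidean (\<lambda>x. f x * g x)"
  by (simp add: continuous_map_atin tendsto_mult)

lemma continuous_map_lookup_mult:
  fixes A B :: "'s \<Rightarrow> mpoly"
  assumes "finite KA" "\<forall>s\<in>topspace T. keys (A s) \<subseteq> KA" "finite KB" "\<forall>s\<in>topspace T. keys (B s) \<subseteq> KB"
    "\<forall>\<alpha>. continuous_map T euclidean (\<lambda>s. lookup (A s) \<alpha>)" "\<forall>\<alpha>. continuous_map T euclidean (\<lambda>s. lookup (B s) \<alpha>)"
  shows "continuous_map T euclidean (\<lambda>s. lookup (A s * B s) \<gamma>)"
proof (rule continuous_map_eq)
  show "continuous_map T euclidean (\<lambda>s. \<Sum>a\<in>KA. \<Sum>b\<in>KB. if a + b = \<gamma> then lookup (A s) a * lookup (B s) b else 0)"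
    by (intro continuous_map_sum assms(1,3)) (simp add: continuous_map_mult assms(5,6))
  fix s assume "s \<in> topspace T"
  then show "(\<Sum>a\<in>KA. \<Sum>b\<in>KB. if a + b = \<gamma> then lookup (A s) a * lookup (B s) b else 0) = lookup (A s * B s) \<gamma>"
    using assms by (intro lookup_mult_eq_sum[symmetric]) auto
qed

lemma finite_keys_power:
  fixes f :: "'s \<Rightarrow> mpoly"
  assumes "finite (\<Union>s\<in>S. keys (f s))"
  shows "finite (\<Union>s\<in>S. keys (f s ^ m))"
proof (induction m)
  case 0
  show ?case by (rule finite_subset[of _ "{0}"]) (auto simp: lookup_one in_keys_iff)
next
  case (Suc m)
  have "(\<Union>s\<in>S. keys (f s ^ Suc m)) \<subseteq> (\<lambda>(a, b). a + b) ` ((\<Union>s\<in>S. keys (f s)) \<times> (\<Union>s\<in>S. keys (f s ^ m)))"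
    using keys_mult[of "f _" "f _ ^ m"] by fastforce
  then show ?case by (rule finite_subset) (use assms Suc.IH in auto)
qed

lemma continuous_map_lookup_power:
  fixes f :: "'s \<Rightarrow> mpoly"
  assumes "finite (\<Union>s\<in>topspace T. keys (f s))" "\<forall>\<alpha>. continuous_map T euclidean (\<lambda>s. lookup (f s) \<alpha>)"
  shows "continuous_map T euclidean (\<lambda>s. lookup (f s ^ m) \<alpha>)"
proof (induction m arbitrary: \<alpha>)
  case 0
  show ?case by (simp add: lookup_one)
next
  case (Suc m)
  have "\<forall>\<alpha>. continuous_map T euclidean (\<lambda>s. lookup (f s ^ m) \<alpha>)" using Suc.IH by blast
  then show ?case
    using continuous_map_lookup_mult[OF assms(1) _ finite_keys_power[OF assms(1)] _ assms(2), of "\<lambda>s. f s ^ m"]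
    by auto
qed

lemma continuous_map_lookup_quotient:
  fixes g F Q :: "'s \<Rightarrow> mpoly"
  assumes FgQ: "\<forall>s\<in>topspace T. F s = g s * Q s" and g0: "\<forall>s\<in>topspace T. g s \<noteq> 0"
    and "finite V" and QV: "\<forall>s\<in>topspace T. keys (Q s) \<subseteq> V"
    and "finite K" and gK: "\<forall>s\<in>topspace T. keys (g s) \<subseteq> K"
    and "finite KF" and FK: "\<forall>s\<in>topspace T. keys (F s) \<subseteq> KF"
    and gc: "\<forall>\<alpha>. continuous_map T euclidean (\<lambda>s. lookup (g s) \<alpha>)"
    and Fc: "\<forall>\<alpha>. continuous_map T euclidean (\<lambda>s. lookup (F s) \<alpha>)"
  shows "continuous_map T euclidean (\<lambda>s. lookup (Q s) \<alpha>)"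
  unfolding continuous_map_atin limitin_canonical_iff
proof
  fix s0 assume s0: "s0 \<in> topspace T"
  obtain C where C: "C > 0" "\<forall>q. keys q \<subseteq> V \<longrightarrow> l1_norm q \<le> C * l1_norm (g s0 * q)"
    using l1_norm_mult_bounded_below[OF _ \<open>finite V\<close>] g0 s0 by blast
  define \<phi> where "\<phi> s = (\<Sum>\<beta>\<in>K. cmod (lookup (g s) \<beta> - lookup (g s0) \<beta>))" for s
  define \<psi> where "\<psi> s = (\<Sum>\<beta>\<in>KF. cmod (lookup (F s) \<beta> - lookup (F s0) \<beta>))" for s
  have lim: "((\<lambda>s. lookup (h s) \<beta>) \<longlongrightarrow> lookup (h s0) \<beta>) (atin T s0)"
    if "\<forall>\<alpha>. continuous_map T euclidean (\<lambda>s. lookup (h s) \<alpha>)" for h :: "'s \<Rightarrow> mpoly" and \<beta>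
    using that s0 by (simp add: continuous_map_atin limitin_canonical_iff)
  have \<phi>0: "(\<phi> \<longlongrightarrow> 0) (atin T s0)" and \<psi>0: "(\<psi> \<longlongrightarrow> 0) (atin T s0)"
    unfolding \<phi>_def \<psi>_def by (intro tendsto_null_sum tendsto_norm_zero LIM_zero lim gc Fc)+
  have "\<forall>\<^sub>F s in atin T s0. C * \<phi> s < 1/2"
    using tendsto_mult_right_zero[OF \<phi>0, of C] by (rule order_tendstoD) simp
  moreover have "\<forall>\<^sub>F s in atin T s0. s \<in> topspace T"
    using s0 by (auto simp: eventually_atin intro: exI[of _ "topspace T"])
  ultimately have "\<forall>\<^sub>F s in atin T s0.
      norm (lookup (Q s) \<alpha> - lookup (Q s0) \<alpha>) \<le> 2 * C * (\<psi> s + \<phi> s * l1_norm (Q s0))"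
  proof eventually_elim
    case (elim s)
    have "l1_norm (g s0 - g s) \<le> \<phi> s"
      using l1_norm_diff_le_sum[OF \<open>finite K\<close>, of "g s" "g s0"] gK s0 elim(2) l1_norm_uminus[of "g s - g s0"]
      by (simp add: \<phi>_def)
    moreover have "l1_norm (g s * Q s - g s0 * Q s0) \<le> \<psi> s"
      using l1_norm_diff_le_sum[OF \<open>finite KF\<close>] FK FgQ s0 elim(2) by (simp add: \<psi>_def)
    moreover have "keys (Q s - Q s0) \<subseteq> V" using keys_diff_subset[of "Q s" "Q s0"] QV s0 elim(2) by auto
    ultimately have "l1_norm (Q s - Q s0) \<le> 2 * C * (\<psi> s + \<phi> s * l1_norm (Q s0))"
      using C elim(1) by (intro l1_norm_quotient_diff_le) auto
    then show ?case using lookup_le_l1_norm[of "Q s - Q s0" \<alpha>] by (simp add: lookup_minus)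
  qed
  moreover have "((\<lambda>s. 2 * C * (\<psi> s + \<phi> s * l1_norm (Q s0))) \<longlongrightarrow> 0) (atin T s0)"
    using tendsto_mult_right_zero[OF tendsto_add_zero[OF \<psi>0 tendsto_mult_left_zero[OF \<phi>0]]] by simp
  ultimately have "((\<lambda>s. lookup (Q s) \<alpha> - lookup (Q s0) \<alpha>) \<longlongrightarrow> 0) (atin T s0)"
    by (rule Lim_null_comparison)
  then show "((\<lambda>s. lookup (Q s) \<alpha>) \<longlongrightarrow> lookup (Q s0) \<alpha>) (atin T s0)"
    by (rule LIM_zero_cancel)
qed

section \<open>The radical presheaves\<close>

lemma in_vars_iff: "in_vars n p \<longleftrightarrow> (\<forall>\<alpha>\<in>keys p. keys \<alpha> \<subseteq> {..<n})"
  by (auto simp: in_vars_def)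

lemma in_vars_power:
  fixes p :: mpoly
  assumes "in_vars n p"
  shows "in_vars n (p ^ m)"
proof (induction m)
  case 0
  then show ?case by (auto simp: in_vars_iff lookup_one in_keys_iff when_def split: if_splits)
next
  case (Suc m)
  show ?case unfolding in_vars_iff
  proof
    fix \<gamma> assume "\<gamma> \<in> keys (p ^ Suc m)"
    then obtain a b where ab: "\<gamma> = a + b" "a \<in> keys p" "b \<in> keys (p ^ m)"
      using keys_mult[of p "p ^ m"] by auto
    then show "keys \<gamma> \<subseteq> {..<n}" using keys_add[of a b] assms Suc.IH by (auto simp: in_vars_iff)
  qed
qed

lemma cpow_in_cpolys:
  assumes "f \<in> cpolys n X U"
  shows "cpow U f m \<in> cpolys n X U"
proof -
  have fin: "finite (\<Union>s\<in>U. keys (f s))" and vars: "\<forall>s\<in>U. in_vars n (f s)"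
    and cont: "\<forall>\<alpha>. continuous_map (subtopology X U) euclidean (\<lambda>s. lookup (f s) \<alpha>)"
    using assms by (auto simp: cpolys_def)
  have "finite (\<Union>s\<in>topspace (subtopology X U). keys (f s))"
    by (rule finite_subset[OF _ fin]) auto
  then have "continuous_map (subtopology X U) euclidean (\<lambda>s. lookup (f s ^ m) \<alpha>)" for \<alpha>
    using cont by (rule continuous_map_lookup_power)
  then have "continuous_map (subtopology X U) euclidean (\<lambda>s. lookup (cpow U f m s) \<alpha>)" for \<alpha>
    by (rule continuous_map_eq) (simp add: cpow_def)
  moreover have "(\<Union>s\<in>U. keys (cpow U f m s)) = (\<Union>s\<in>U. keys (f s ^ m))"
    by (simp add: cpow_def)
  ultimately show ?thesis
    using finite_keys_power[OF fin] vars in_vars_power by (auto simp: cpolys_def cpow_def)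
qed

lemma quotient_in_cpolys:
  assumes F: "F \<in> cpolys n X U" and g: "g \<in> cpolys n X (topspace X)" and "U \<subseteq> topspace X"
    and g0: "\<forall>s\<in>U. g s \<noteq> 0" and FgQ: "\<forall>s\<in>U. F s = g s * Q s" and Q0: "\<forall>s. s \<notin> U \<longrightarrow> Q s = 0"
  shows "Q \<in> cpolys n X U"
proof -
  define T where "T = subtopology X U"
  have tT: "topspace T = U" using \<open>U \<subseteq> topspace X\<close> by (auto simp: T_def)
  define KF where "KF = (\<Union>s\<in>U. keys (F s))"
  define Kg where "Kg = (\<Union>s\<in>topspace X. keys (g s))"
  define N where "N = Max (insert 0 (weighted_degree (\<lambda>i. 1) ` KF))"
  have "finite KF" "finite Kg" using F g by (auto simp: cpolys_def KF_def Kg_def)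
  have QV: "keys (Q s) \<subseteq> monomials_upto n N" if "s \<in> U" for s
  proof (rule keys_factor_subset_monomials_upto[OF FgQ[rule_format, OF that] g0[rule_format, OF that]])
    show "\<forall>\<alpha>\<in>keys (F s). \<alpha> \<in> monomials_upto n N"
    proof
      fix \<alpha> assume \<alpha>: "\<alpha> \<in> keys (F s)"
      then have "weighted_degree (\<lambda>i. 1) \<alpha> \<le> N"
        unfolding N_def using that \<open>finite KF\<close> by (intro Max_ge) (auto simp: KF_def)
      then show "\<alpha> \<in> monomials_upto n N"
        using F that \<alpha> by (auto simp: monomials_upto_def cpolys_def in_vars_iff)
    qed
  qed
  have "continuous_map T euclidean (\<lambda>s. lookup (Q s) \<alpha>)" for \<alpha>
  proof (rule continuous_map_lookup_quotient[of T F g Q "monomials_upto n N" Kg KF])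
    show "\<forall>\<alpha>. continuous_map T euclidean (\<lambda>s. lookup (g s) \<alpha>)"
      using g by (auto simp: cpolys_def T_def subtopology_topspace intro: continuous_map_from_subtopology)
    show "\<forall>\<alpha>. continuous_map T euclidean (\<lambda>s. lookup (F s) \<alpha>)"
      using F by (simp add: cpolys_def T_def)
  qed (use tT FgQ g0 QV \<open>U \<subseteq> topspace X\<close> \<open>finite KF\<close> \<open>finite Kg\<close> finite_monomials_upto in
      \<open>auto simp: KF_def Kg_def\<close>)
  moreover have "finite (\<Union>s\<in>U. keys (Q s))"
    using QV by (intro finite_subset[OF _ finite_monomials_upto]) auto
  moreover have "in_vars n (Q s)" if "s \<in> U" for s
    using QV[OF that] by (auto simp: in_vars_iff monomials_upto_def)
  ultimately show ?thesis using Q0 by (auto simp: cpolys_def T_def)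
qed

lemma uniform_radical_exponent:
  fixes G :: "'s \<Rightarrow> mpoly"
  assumes fin: "finite (\<Union>s\<in>S. keys (G s))" and G0: "\<forall>s\<in>S. G s \<noteq> 0"
  shows "\<exists>D. \<forall>s\<in>S. \<forall>p k. G s dvd p ^ k \<longrightarrow> G s dvd p ^ D"
proof -
  define K where "K = (\<Union>s\<in>S. keys (G s))"
  have "finite K" using fin by (simp add: K_def)
  obtain n where n: "\<forall>\<alpha>\<in>K. keys \<alpha> \<subseteq> {..<n}" using ex_vars_bound[OF \<open>finite K\<close>] by blast
  obtain B where exps: "\<forall>\<alpha>\<in>K. \<forall>i. lookup \<alpha> i < B" using ex_exponent_bound[OF \<open>finite K\<close>] by blast
  define D where "D = Max (insert 0 (radix_weight B ` K))"
  have "G s dvd p ^ D" if s: "s \<in> S" and dvd: "G s dvd p ^ k" for s p k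
  proof -
    have "keys (G s) \<subseteq> K" using s by (auto simp: K_def)
    then have "G s \<noteq> 0" "\<forall>\<alpha>\<in>keys (G s). keys \<alpha> \<subseteq> {..<n}" "\<forall>\<alpha>\<in>keys (G s). \<forall>i. lookup \<alpha> i < B"
      using G0 s n exps by auto
    then obtain \<alpha> where \<alpha>: "\<alpha> \<in> keys (G s)" "G s dvd p ^ radix_weight B \<alpha>"
      using dvd_power_radix_weight[OF _ _ _ dvd] by blast
    have "radix_weight B \<alpha> \<le> D"
      unfolding D_def using \<alpha>(1) \<open>keys (G s) \<subseteq> K\<close> \<open>finite K\<close> by (intro Max_ge) auto
    then show ?thesis using \<alpha>(2) le_imp_power_dvd dvd_trans by blast
  qed
  then show ?thesis by blast
qed

lemma sqrt_ideal_subset_FRad: "sqrt_ideal n X g U \<subseteq> FRad n X g U"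
proof
  fix f assume "f \<in> sqrt_ideal n X g U"
  then obtain m where f: "f \<in> cpolys n X U" "cpow U f m \<in> gen_ideal n X g U"
    by (auto simp: sqrt_ideal_def)
  have "f s ^ m \<in> ideal_at n X g U s" if "s \<in> U" for s
  proof -
    have "f s ^ m = cpow U f m s" using that by (simp add: cpow_def)
    then show ?thesis using f(2) by (auto simp: ideal_at_def)
  qed
  then show "f \<in> FRad n X g U" using f(1) by (auto simp: FRad_def poly_radical_def)
qed

lemma FRad_subset_sqrt_ideal:
  assumes g: "g \<in> cpolys n X (topspace X)" and g0: "\<forall>s\<in>topspace X. g s \<noteq> 0"
    and U: "U \<subseteq> topspace X"
  shows "FRad n X g U \<subseteq> sqrt_ideal n X g U"
proof
  fix f assume f: "f \<in> FRad n X g U"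
  obtain D where D: "\<forall>s\<in>topspace X. \<forall>p k. g s dvd p ^ k \<longrightarrow> g s dvd p ^ D"
    using uniform_radical_exponent[OF _ g0] g by (auto simp: cpolys_def)
  have "g s dvd f s ^ D" if s: "s \<in> U" for s
  proof -
    obtain m where "f s ^ m \<in> ideal_at n X g U s"
      using f s by (auto simp: FRad_def poly_radical_def)
    then obtain h where "h \<in> cpolys n X U" "f s ^ m = h s * restr U g s"
      by (auto simp: ideal_at_def gen_ideal_def)
    then have "g s dvd f s ^ m" using s by (simp add: restr_def)
    then show ?thesis using D U s by blast
  qed
  then have "\<forall>s\<in>U. \<exists>q. f s ^ D = g s * q" by (auto simp: dvd_def)
  then obtain Q' where Q': "\<forall>s\<in>U. f s ^ D = g s * Q' s" by (rule bchoice[THEN exE])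
  define Q where "Q s = (if s \<in> U then Q' s else 0)" for s
  have Q: "\<forall>s\<in>U. f s ^ D = g s * Q s" "\<forall>s. s \<notin> U \<longrightarrow> Q s = 0"
    using Q' by (simp_all add: Q_def)
  have "cpow U f D \<in> cpolys n X U" using f by (intro cpow_in_cpolys) (simp add: FRad_def)
  then have "Q \<in> cpolys n X U"
    by (rule quotient_in_cpolys[OF _ g U _ _ Q(2)]) (use g0 U Q(1) in \<open>auto simp: cpow_def\<close>)
  moreover have "cpow U f D = (\<lambda>s. Q s * restr U g s)"
    using Q by (auto simp: cpow_def restr_def mult.commute)
  ultimately have "cpow U f D \<in> gen_ideal n X g U" by (auto simp: gen_ideal_def)
  then show "f \<in> sqrt_ideal n X g U" using f by (auto simp: FRad_def sqrt_ideal_def)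
qed

theorem mainTheorem3:
  fixes X :: "'s topology" and n :: nat and g :: "'s \<Rightarrow> mpoly"
  assumes "compact_space X"
    and "g \<in> cpolys n X (topspace X)"
    and "\<forall>s\<in>topspace X. g s \<noteq> 0"
  shows "\<forall>U. openin X U \<longrightarrow> FRad n X g U = sqrt_ideal n X g U"
proof (intro allI impI)
  fix U assume "openin X U"
  then have "U \<subseteq> topspace X" by (rule openin_subset)
  then show "FRad n X g U = sqrt_ideal n X g U"
    by (intro subset_antisym FRad_subset_sqrt_ideal[OF assms(2,3)] sqrt_ideal_subset_FRad)
qed

end
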